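(* For all integers $t,r\ge 2$, $$F_v(T_{2tr,2r},T_{2tr,2r};2r+1)\le 5F_v(T_{tr,r},T_{tr,r};r+1).$$ In particular, $F_v(T_{4t,4},T_{4t,4};5)\le 50t-25$ for all $t\ge2$.
   Context: All graphs are finite and simple. $T_{n,s}$ is the Turán graph: the complete $s$-partite graph on $n$ vertices with parts as equal as possible (so $T_{st,s}$ is complete $s$-partite with all parts of size $t$; $T_{2t,2}=K_{t,t}$). "A graph $F$ contains $H$" means $F$ has a (not necessarily induced) subgraph isomorphic to $H$. $G\rightarrow(H_1,H_2)^v$ means: for every partition $V(G)=X_1\cup X_2$ there is $i$ such that the subgraph induced by $X_i$ contains $H_i$. $F_v(H_1,H_2;k)$ is the minimum number of vertices of a $K_k$-free graph $G$ with $G\rightarrow(H_1,H_2)^v$. *)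

theory Defs
  imports Main "HOL-Library.Extended_Nat"
begin

definition simple_graph :: "nat set \<Rightarrow> (nat \<Rightarrow> nat \<Rightarrow> bool) \<Rightarrow> bool" where
  "simple_graph V E \<longleftrightarrow> finite V \<and>
     (\<forall>u v. E u v \<longrightarrow> u \<in> V \<and> v \<in> V \<and> u \<noteq> v \<and> E v u)"

text \<open>Turan graph T(n,s): vertices 0..n-1, vertex i in part (i mod s);
  two vertices adjacent iff in different parts. Part sizes differ by at most one.\<close>
definition turan_V :: "nat \<Rightarrow> nat set" where
  "turan_V n = {..<n}"
definition turan_E :: "nat \<Rightarrow> nat \<Rightarrow> nat \<Rightarrow> nat \<Rightarrow> bool" where
  "turan_E n s u v \<longleftrightarrow> u < n \<and> v < n \<and> u mod s \<noteq> v mod s"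

definition complete_V :: "nat \<Rightarrow> nat set" where
  "complete_V k = {..<k}"
definition complete_E :: "nat \<Rightarrow> nat \<Rightarrow> nat \<Rightarrow> bool" where
  "complete_E k u v \<longleftrightarrow> u < k \<and> v < k \<and> u \<noteq> v"

definition induced_E :: "(nat \<Rightarrow> nat \<Rightarrow> bool) \<Rightarrow> nat set \<Rightarrow> nat \<Rightarrow> nat \<Rightarrow> bool" where
  "induced_E E X u v \<longleftrightarrow> u \<in> X \<and> v \<in> X \<and> E u v"

definition contains :: "nat set \<Rightarrow> (nat \<Rightarrow> nat \<Rightarrow> bool) \<Rightarrow> nat set \<Rightarrow> (nat \<Rightarrow> nat \<Rightarrow> bool) \<Rightarrow> bool" where
  "contains V E HV HE \<longleftrightarrow> (\<exists>f. inj_on f HV \<and> f ` HV \<subseteq> V \<and>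
      (\<forall>u\<in>HV. \<forall>v\<in>HV. HE u v \<longrightarrow> E (f u) (f v)))"

definition vertex_arrows :: "nat set \<Rightarrow> (nat \<Rightarrow> nat \<Rightarrow> bool) \<Rightarrow>
    nat set \<Rightarrow> (nat \<Rightarrow> nat \<Rightarrow> bool) \<Rightarrow> nat set \<Rightarrow> (nat \<Rightarrow> nat \<Rightarrow> bool) \<Rightarrow> bool" where
  "vertex_arrows V E H1V H1E H2V H2E \<longleftrightarrow>
     (\<forall>X1 X2. X1 \<union> X2 = V \<and> X1 \<inter> X2 = {} \<longrightarrow>
        contains X1 (induced_E E X1) H1V H1E \<or> contains X2 (induced_E E X2) H2V H2E)"

text \<open>Vertex Folkman number F_v(H1,H2;k) as an extended natural
  (infinity if no such graph exists).\<close>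
definition Fv :: "nat set \<Rightarrow> (nat \<Rightarrow> nat \<Rightarrow> bool) \<Rightarrow> nat set \<Rightarrow> (nat \<Rightarrow> nat \<Rightarrow> bool) \<Rightarrow> nat \<Rightarrow> enat" where
  "Fv H1V H1E H2V H2E k = Inf {enat (card V) | V E. simple_graph V E \<and>
      \<not> contains V E (complete_V k) (complete_E k) \<and> vertex_arrows V E H1V H1E H2V H2E}"

end

theory Submission
  imports Defs
begin

text \<open>Replace every vertex of the 5-cycle by a copy of \<open>G\<close> and join the copies at adjacent
  positions completely.  As \<open>C\<^sub>5\<close> is triangle-free, a clique meets at most two copies,
  so the clique number at most doubles.  As \<open>C\<^sub>5\<close> is an odd cycle, in every 2-colouring
  two adjacent copies receive a \<open>T(tr, r)\<close> of the same colour, and the complete join of two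
  copies of \<open>T(tr, r)\<close> contains \<open>T(2tr, 2r)\<close>.  The explicit bound comes from doing this
  twice, starting with the edgeless graph on \<open>2t - 1\<close> vertices, which arrows
  \<open>(T(t, 1), T(t, 1))\<close> by pigeonhole.\<close>

definition C5_adj :: "nat \<Rightarrow> nat \<Rightarrow> bool" where
  "C5_adj a b \<longleftrightarrow> (a + 1) mod 5 = b \<or> (b + 1) mod 5 = a"

lemma C5_adj_iff:
  assumes "a < 5" "b < 5"
  shows "C5_adj a b \<longleftrightarrow> a + 1 = b \<or> b + 1 = a \<or> (a = 4 \<and> b = 0) \<or> (a = 0 \<and> b = 4)"
proof -
  have "(x + 1) mod 5 = (if x = 4 then 0 else x + 1)" if "x < 5" for x :: nat
    using that by (cases "x = 4") auto
  then show ?thesis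
    using assms unfolding C5_adj_def by auto
qed

lemma C5_adj_irrefl: "\<not> C5_adj a a"
proof
  assume adj: "C5_adj a a"
  then have "a < 5"
    unfolding C5_adj_def by auto
  then show False
    using adj C5_adj_iff by auto
qed

lemma C5_adj_sym: "C5_adj a b \<Longrightarrow> C5_adj b a"
  unfolding C5_adj_def by blast

lemma C5_triangle_free:
  assumes "a < 5" "b < 5" "c < 5" "C5_adj a b" "C5_adj b c"
  shows "\<not> C5_adj a c"
  using assms by (simp add: C5_adj_iff) linarith

lemma C5_not_bipartite:
  fixes P :: "nat \<Rightarrow> bool"
  shows "\<exists>i j. i < 5 \<and> j < 5 \<and> C5_adj i j \<and> P i = P j"
proof -
  have "P 0 = P 1 \<or> P 1 = P 2 \<or> P 2 = P 3 \<or> P 3 = P 4 \<or> P 4 = P 0"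
    by blast
  moreover have "C5_adj 0 1" "C5_adj 1 2" "C5_adj 2 3" "C5_adj 3 4" "C5_adj 4 0"
    unfolding C5_adj_def by simp_all
  moreover have "(0::nat) < 5" "(1::nat) < 5" "(2::nat) < 5" "(3::nat) < 5" "(4::nat) < 5"
    by simp_all
  ultimately show ?thesis
    by blast
qed

lemma contains_induced_iff:
  "contains X (induced_E E X) HV HE \<longleftrightarrow> contains X E HV HE"
  unfolding contains_def induced_E_def by (simp add: image_subset_iff cong: conj_cong)

lemma contains_embed:
  assumes "contains V E HV HE" "inj_on m V" "m ` V \<subseteq> V'"
    and "\<And>u v. u \<in> V \<Longrightarrow> v \<in> V \<Longrightarrow> E u v \<Longrightarrow> E' (m u) (m v)"
  shows "contains V' E' HV HE"
proof -
  obtain f where f: "inj_on f HV" "f ` HV \<subseteq> V" "\<forall>u\<in>HV. \<forall>v\<in>HV. HE u v \<longrightarrow> E (f u) (f v)"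
    using assms(1) unfolding contains_def by blast
  have "inj_on (m \<circ> f) HV"
    using f(1,2) assms(2) by (simp add: comp_inj_on inj_on_subset)
  moreover have "(m \<circ> f) ` HV \<subseteq> V'"
    using f(2) assms(3) by auto
  moreover have "E' ((m \<circ> f) u) ((m \<circ> f) v)" if "u \<in> HV" "v \<in> HV" "HE u v" for u v
    using that f(2,3) assms(4) by (simp add: image_subset_iff)
  ultimately show ?thesis
    unfolding contains_def by blast
qed

lemma contains_mono: "contains V E HV HE \<Longrightarrow> V \<subseteq> V' \<Longrightarrow> contains V' E HV HE"
  unfolding contains_def by (meson order_trans)

lemma contains_complete_iff:
  "contains V E (complete_V k) (complete_E k) \<longleftrightarrow>
     (\<exists>S\<subseteq>V. finite S \<and> card S = k \<and> (\<forall>x\<in>S. \<forall>y\<in>S. x \<noteq> y \<longrightarrow> E x y))"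
proof
  assume "contains V E (complete_V k) (complete_E k)"
  then obtain f where f: "inj_on f {..<k}" "f ` {..<k} \<subseteq> V"
    "\<forall>u\<in>{..<k}. \<forall>v\<in>{..<k}. complete_E k u v \<longrightarrow> E (f u) (f v)"
    unfolding contains_def complete_V_def by blast
  have "\<forall>x\<in>f ` {..<k}. \<forall>y\<in>f ` {..<k}. x \<noteq> y \<longrightarrow> E x y"
    using f(3) unfolding complete_E_def by blast
  moreover have "card (f ` {..<k}) = k"
    using card_image[OF f(1)] by simp
  ultimately show "\<exists>S\<subseteq>V. finite S \<and> card S = k \<and> (\<forall>x\<in>S. \<forall>y\<in>S. x \<noteq> y \<longrightarrow> E x y)"
    using f(2) by blast
next
  assume "\<exists>S\<subseteq>V. finite S \<and> card S = k \<and> (\<forall>x\<in>S. \<forall>y\<in>S. x \<noteq> y \<longrightarrow> E x y)"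
  then obtain S where S: "S \<subseteq> V" "finite S" "card S = k" "\<forall>x\<in>S. \<forall>y\<in>S. x \<noteq> y \<longrightarrow> E x y"
    by blast
  obtain h where h: "bij_betw h {..<k} S"
    using ex_bij_betw_nat_finite[OF S(2)] S(3) by (auto simp: atLeast0LessThan)
  have "inj_on h {..<k}" "h ` {..<k} \<subseteq> V"
    using h S(1) unfolding bij_betw_def by auto
  moreover have "E (h u) (h v)" if "u < k" "v < k" "u \<noteq> v" for u v
    using that h S(4) unfolding bij_betw_def inj_on_def by blast
  ultimately show "contains V E (complete_V k) (complete_E k)"
    unfolding contains_def complete_V_def complete_E_def by blast
qed

lemma clique_card_le:
  assumes "\<not> contains V E (complete_V (r + 1)) (complete_E (r + 1))"
    and "S \<subseteq> V" "\<forall>x\<in>S. \<forall>y\<in>S. x \<noteq> y \<longrightarrow> E x y"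
  shows "card S \<le> r"
proof (rule ccontr)
  assume "\<not> card S \<le> r"
  then have "r + 1 \<le> card S"
    by linarith
  then obtain T where T: "T \<subseteq> S" "card T = r + 1" "finite T"
    by (rule obtain_subset_with_card_n)
  then have "T \<subseteq> V" "\<forall>x\<in>T. \<forall>y\<in>T. x \<noteq> y \<longrightarrow> E x y"
    using assms(2,3) by blast+
  then show False
    using T(2,3) assms(1) unfolding contains_complete_iff by blast
qed


lemma mod_double_eq_iff:
  fixes u v r :: nat
  shows "u mod (2 * r) = v mod (2 * r) \<longleftrightarrow>
    u mod r = v mod r \<and> (u mod (2 * r) < r \<longleftrightarrow> v mod (2 * r) < r)"
proof (cases "r = 0")
  case False
  have mod_mod: "w mod (2 * r) mod r = w mod r" for w :: nat
    by (simp add: mod_mod_cancel)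
  have lower: "w mod (2 * r) = w mod r" if "w mod (2 * r) < r" for w :: nat
    using that mod_mod[of w] by simp
  have upper: "w mod (2 * r) = w mod r + r" if "\<not> w mod (2 * r) < r" for w :: nat
  proof -
    have "w mod (2 * r) < 2 * r"
      using False by simp
    then have "w mod (2 * r) - r < r"
      by linarith
    moreover have "w mod (2 * r) mod r = (w mod (2 * r) - r) mod r"
      using that by (simp add: le_mod_geq)
    ultimately show ?thesis
      using that mod_mod[of w] by simp
  qed
  show ?thesis
  proof
    assume "u mod (2 * r) = v mod (2 * r)"
    then show "u mod r = v mod r \<and> (u mod (2 * r) < r \<longleftrightarrow> v mod (2 * r) < r)"
      using mod_mod[of u] mod_mod[of v] by simp
  next
    assume "u mod r = v mod r \<and> (u mod (2 * r) < r \<longleftrightarrow> v mod (2 * r) < r)"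
    then show "u mod (2 * r) = v mod (2 * r)"
      using lower[of u] lower[of v] upper[of u] upper[of v] by (cases "u mod (2 * r) < r") simp_all
  qed
qed simp

lemma contains_turan_join:
  fixes r t :: nat
  assumes "r \<ge> 1" "A \<inter> B = {}" "\<forall>a\<in>A. \<forall>b\<in>B. E a b \<and> E b a"
    and "contains A E (turan_V (t * r)) (turan_E (t * r) r)"
    and "contains B E (turan_V (t * r)) (turan_E (t * r) r)"
  shows "contains (A \<union> B) E (turan_V (2 * t * r)) (turan_E (2 * t * r) (2 * r))"
proof -
  obtain f where f: "inj_on f {..<t * r}" "f ` {..<t * r} \<subseteq> A"
    "\<forall>u\<in>{..<t * r}. \<forall>v\<in>{..<t * r}. turan_E (t * r) r u v \<longrightarrow> E (f u) (f v)"
    using assms(4) unfolding contains_def turan_V_def by blast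
  obtain g where g: "inj_on g {..<t * r}" "g ` {..<t * r} \<subseteq> B"
    "\<forall>u\<in>{..<t * r}. \<forall>v\<in>{..<t * r}. turan_E (t * r) r u v \<longrightarrow> E (g u) (g v)"
    using assms(5) unfolding contains_def turan_V_def by blast
  txt \<open>Vertex \<open>u\<close> of \<open>T(2tr, 2r)\<close> goes to the side \<open>A\<close> iff its part \<open>u mod 2r\<close> is
    among the first \<open>r\<close>, and there to the vertex \<open>\<pi> u\<close> of \<open>T(tr, r)\<close>, which keeps the
    block \<open>u div 2r\<close> and the part modulo \<open>r\<close>.\<close>
  define left where "left u \<longleftrightarrow> u mod (2 * r) < r" for u
  define \<pi> where "\<pi> u = u div (2 * r) * r + u mod r" for u
  define h where "h u = (if left u then f (\<pi> u) else g (\<pi> u))" for u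
  have \<pi>_div: "\<pi> u div r = u div (2 * r)" and \<pi>_mod: "\<pi> u mod r = u mod r" for u
    using assms(1) unfolding \<pi>_def by simp_all
  have \<pi>_lt: "\<pi> u < t * r" if "u < 2 * t * r" for u
  proof -
    have "u div (2 * r) < t"
      using that by (simp add: less_mult_imp_div_less mult.commute mult.left_commute)
    then have "(u div (2 * r) + 1) * r \<le> t * r"
      by (intro mult_right_mono) simp_all
    moreover have "u mod r < r"
      using assms(1) by simp
    ultimately show ?thesis
      unfolding \<pi>_def by (simp add: algebra_simps)
  qed
  have h_in: "(left u \<longrightarrow> h u \<in> A) \<and> (\<not> left u \<longrightarrow> h u \<in> B)" if "u < 2 * t * r" for u
    using f(2) g(2) \<pi>_lt[OF that] unfolding h_def by auto
  show ?thesis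
    unfolding contains_def turan_V_def
  proof (intro exI conjI ballI impI)
    show "inj_on h {..<2 * t * r}"
    proof (rule inj_onI)
      fix u v assume u: "u \<in> {..<2 * t * r}" and v: "v \<in> {..<2 * t * r}" and huv: "h u = h v"
      have same_side: "left u = left v"
        using h_in[of u] h_in[of v] u v huv assms(2) by auto
      then have "\<pi> u = \<pi> v"
        using huv f(1) g(1) \<pi>_lt u v unfolding h_def inj_on_def by (auto split: if_splits)
      then have "u div (2 * r) = v div (2 * r)" "u mod (2 * r) = v mod (2 * r)"
        using \<pi>_div \<pi>_mod same_side mod_double_eq_iff unfolding left_def by metis+
      then show "u = v"
        by (metis div_mult_mod_eq)
    qed
    show "h ` {..<2 * t * r} \<subseteq> A \<union> B"
      using h_in by auto
    fix u v assume u: "u \<in> {..<2 * t * r}" and v: "v \<in> {..<2 * t * r}"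
      and uv: "turan_E (2 * t * r) (2 * r) u v"
    show "E (h u) (h v)"
    proof (cases "left u = left v")
      case True
      then have "u mod r \<noteq> v mod r"
        using uv mod_double_eq_iff unfolding turan_E_def left_def by blast
      then have "turan_E (t * r) r (\<pi> u) (\<pi> v)"
        using \<pi>_lt u v \<pi>_mod unfolding turan_E_def by simp
      then show ?thesis
        using True f(3) g(3) \<pi>_lt u v unfolding h_def by simp
    next
      case False
      then show ?thesis
        using h_in[of u] h_in[of v] u v assms(3) by auto
    qed
  qed
qed

text \<open>The lexicographic product \<open>C\<^sub>5[G]\<close>: vertex \<open>5 * v + i\<close> is the copy of \<open>v\<close> at
  position \<open>i\<close> of the 5-cycle; copies at equal positions carry the edges of \<open>G\<close>, copies at
  adjacent positions are completely joined.\<close>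

definition C5_blowup_V :: "nat set \<Rightarrow> nat set" where
  "C5_blowup_V V = {x. x div 5 \<in> V}"

definition C5_blowup_E :: "nat set \<Rightarrow> (nat \<Rightarrow> nat \<Rightarrow> bool) \<Rightarrow> nat \<Rightarrow> nat \<Rightarrow> bool" where
  "C5_blowup_E V E x y \<longleftrightarrow> x \<in> C5_blowup_V V \<and> y \<in> C5_blowup_V V \<and>
     ((x mod 5 = y mod 5 \<and> E (x div 5) (y div 5)) \<or> C5_adj (x mod 5) (y mod 5))"

lemma C5_blowup_V_eq_image: "C5_blowup_V V = (\<lambda>(v, i). 5 * v + i) ` (V \<times> {..<5})"
proof (intro equalityI subsetI)
  fix x assume "x \<in> C5_blowup_V V"
  then have "(x div 5, x mod 5) \<in> V \<times> {..<5}"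
    unfolding C5_blowup_V_def by simp
  then show "x \<in> (\<lambda>(v, i). 5 * v + i) ` (V \<times> {..<5})"
    by (rule rev_image_eqI) simp
next
  fix x assume "x \<in> (\<lambda>(v, i). 5 * v + i) ` (V \<times> {..<5::nat})"
  then show "x \<in> C5_blowup_V V"
    unfolding C5_blowup_V_def by auto
qed

lemma card_C5_blowup_V:
  assumes "finite V"
  shows "card (C5_blowup_V V) = 5 * card V"
proof -
  have "inj_on (\<lambda>(v, i). 5 * v + i) (V \<times> {..<5::nat})"
    by (rule inj_onI) (auto dest: arg_cong[where f = "\<lambda>x. x mod 5"])
  then show ?thesis
    unfolding C5_blowup_V_eq_image using assms by (simp add: card_image card_cartesian_product)
qed

lemma simple_graph_C5_blowup:
  assumes "simple_graph V E"
  shows "simple_graph (C5_blowup_V V) (C5_blowup_E V E)"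
  unfolding simple_graph_def
proof (intro conjI allI impI)
  show "finite (C5_blowup_V V)"
    using assms unfolding simple_graph_def C5_blowup_V_eq_image by simp
  fix x y assume xy: "C5_blowup_E V E x y"
  then show "x \<in> C5_blowup_V V" "y \<in> C5_blowup_V V"
    unfolding C5_blowup_E_def by simp_all
  have E_sym: "E v u \<and> u \<noteq> v" if "E u v" for u v
    using that assms unfolding simple_graph_def by blast
  show "x \<noteq> y"
    using xy E_sym C5_adj_irrefl unfolding C5_blowup_E_def by auto
  show "C5_blowup_E V E y x"
    using xy E_sym C5_adj_sym unfolding C5_blowup_E_def by auto
qed

lemma C5_blowup_clique_free:
  assumes "\<not> contains V E (complete_V (r + 1)) (complete_E (r + 1))"
  shows "\<not> contains (C5_blowup_V V) (C5_blowup_E V E) (complete_V (2 * r + 1)) (complete_E (2 * r + 1))"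
proof
  assume "contains (C5_blowup_V V) (C5_blowup_E V E) (complete_V (2 * r + 1)) (complete_E (2 * r + 1))"
  then have "\<exists>S\<subseteq>C5_blowup_V V. finite S \<and> card S = 2 * r + 1 \<and>
      (\<forall>x\<in>S. \<forall>y\<in>S. x \<noteq> y \<longrightarrow> C5_blowup_E V E x y)"
    by (simp only: contains_complete_iff)
  then obtain S where S: "S \<subseteq> C5_blowup_V V" "finite S" "card S = 2 * r + 1"
    and clique: "\<forall>x\<in>S. \<forall>y\<in>S. x \<noteq> y \<longrightarrow> C5_blowup_E V E x y"
    by blast
  define layer where "layer a = {x \<in> S. x mod 5 = a}" for a
  have card_layer: "card (layer a) \<le> r" for a
  proof -
    have "inj_on (\<lambda>x. x div 5) (layer a)"
    proof (rule inj_onI)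
      fix x y assume "x \<in> layer a" "y \<in> layer a" "x div 5 = y div 5"
      then have "x mod 5 = y mod 5" "x div 5 = y div 5"
        unfolding layer_def by simp_all
      then show "x = y"
        by (metis div_mult_mod_eq)
    qed
    moreover have "(\<lambda>x. x div 5) ` layer a \<subseteq> V"
      using S(1) unfolding layer_def C5_blowup_V_def by auto
    moreover have "\<forall>p\<in>(\<lambda>x. x div 5) ` layer a. \<forall>q\<in>(\<lambda>x. x div 5) ` layer a. p \<noteq> q \<longrightarrow> E p q"
      using clique C5_adj_irrefl unfolding layer_def C5_blowup_E_def by fastforce
    ultimately show ?thesis
      using clique_card_le[OF assms] card_image by metis
  qed
  have adj: "C5_adj (x mod 5) (y mod 5)" if "x \<in> S" "y \<in> S" "x mod 5 \<noteq> y mod 5" for x y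
    using that clique unfolding C5_blowup_E_def by fastforce
  have "\<exists>a b. S \<subseteq> layer a \<union> layer b"
  proof (rule ccontr)
    assume none: "\<not> (\<exists>a b. S \<subseteq> layer a \<union> layer b)"
    then obtain x where x: "x \<in> S"
      by blast
    obtain y where y: "y \<in> S" "y mod 5 \<noteq> x mod 5"
      using none unfolding layer_def by blast
    obtain z where z: "z \<in> S" "z mod 5 \<noteq> x mod 5" "z mod 5 \<noteq> y mod 5"
      using none unfolding layer_def by blast
    show False
      using C5_triangle_free[of "x mod 5" "y mod 5" "z mod 5"] adj x y z by (simp add: C5_adj_sym)
  qed
  then obtain a b where ab: "S \<subseteq> layer a \<union> layer b"
    by blast
  have "finite (layer a \<union> layer b)"
    using S(2) unfolding layer_def by simp
  then have "card S \<le> card (layer a \<union> layer b)"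
    using ab by (rule card_mono)
  also have "\<dots> \<le> card (layer a) + card (layer b)"
    by (rule card_Un_le)
  finally have "card S \<le> card (layer a) + card (layer b)" .
  then show False
    using S(3) card_layer[of a] card_layer[of b] by linarith
qed

lemma C5_blowup_contains_layer:
  assumes "contains {v \<in> V. 5 * v + k \<in> X} E HV HE" "k < 5"
  shows "contains ((\<lambda>v. 5 * v + k) ` {v \<in> V. 5 * v + k \<in> X}) (C5_blowup_E V E) HV HE"
proof (rule contains_embed[OF assms(1)])
  show "inj_on (\<lambda>v. 5 * v + k) {v \<in> V. 5 * v + k \<in> X}"
    by (rule inj_onI) simp
  fix u v assume "u \<in> {v \<in> V. 5 * v + k \<in> X}" "v \<in> {v \<in> V. 5 * v + k \<in> X}" "E u v"
  then show "C5_blowup_E V E (5 * u + k) (5 * v + k)"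
    using assms(2) unfolding C5_blowup_E_def C5_blowup_V_def by simp
qed simp

lemma C5_blowup_contains_turan:
  assumes "r \<ge> 1" "k < 5" "j < 5" "C5_adj k j" "X \<subseteq> C5_blowup_V V"
    and "contains {v \<in> V. 5 * v + k \<in> X} E (turan_V (t * r)) (turan_E (t * r) r)"
    and "contains {v \<in> V. 5 * v + j \<in> X} E (turan_V (t * r)) (turan_E (t * r) r)"
  shows "contains X (C5_blowup_E V E) (turan_V (2 * t * r)) (turan_E (2 * t * r) (2 * r))"
proof -
  define A where "A = (\<lambda>v. 5 * v + k) ` {v \<in> V. 5 * v + k \<in> X}"
  define B where "B = (\<lambda>v. 5 * v + j) ` {v \<in> V. 5 * v + j \<in> X}"
  have "A \<subseteq> X" "B \<subseteq> X"
    unfolding A_def B_def by auto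
  have "A \<inter> B = {}"
    using assms(2-4) C5_adj_irrefl unfolding A_def B_def
    by (auto dest: arg_cong[where f = "\<lambda>x. x mod 5"])
  moreover have "\<forall>a\<in>A. \<forall>b\<in>B. C5_blowup_E V E a b \<and> C5_blowup_E V E b a"
    using assms(2-5) C5_adj_sym \<open>A \<subseteq> X\<close> \<open>B \<subseteq> X\<close> unfolding A_def B_def C5_blowup_E_def by auto
  moreover have "contains A (C5_blowup_E V E) (turan_V (t * r)) (turan_E (t * r) r)"
    unfolding A_def using assms(6,2) by (rule C5_blowup_contains_layer)
  moreover have "contains B (C5_blowup_E V E) (turan_V (t * r)) (turan_E (t * r) r)"
    unfolding B_def using assms(7,3) by (rule C5_blowup_contains_layer)
  ultimately have "contains (A \<union> B) (C5_blowup_E V E) (turan_V (2 * t * r)) (turan_E (2 * t * r) (2 * r))"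
    by (rule contains_turan_join[OF assms(1)])
  then show ?thesis
    by (rule contains_mono) (use \<open>A \<subseteq> X\<close> \<open>B \<subseteq> X\<close> in blast)
qed

lemma vertex_arrows_C5_blowup:
  assumes "r \<ge> 1"
    and "vertex_arrows V E (turan_V (t * r)) (turan_E (t * r) r) (turan_V (t * r)) (turan_E (t * r) r)"
  shows "vertex_arrows (C5_blowup_V V) (C5_blowup_E V E)
    (turan_V (2 * t * r)) (turan_E (2 * t * r) (2 * r)) (turan_V (2 * t * r)) (turan_E (2 * t * r) (2 * r))"
  unfolding vertex_arrows_def contains_induced_iff
proof (intro allI impI)
  fix X1 X2 assume part: "X1 \<union> X2 = C5_blowup_V V \<and> X1 \<inter> X2 = {}"
  let ?T = "\<lambda>X k. contains {v \<in> V. 5 * v + k \<in> X} E (turan_V (t * r)) (turan_E (t * r) r)"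
  have layer: "?T X1 k \<or> ?T X2 k" if "k < 5" for k
  proof -
    have "{v \<in> V. 5 * v + k \<in> X1} \<union> {v \<in> V. 5 * v + k \<in> X2} = V"
      using part that unfolding C5_blowup_V_def by auto
    moreover have "{v \<in> V. 5 * v + k \<in> X1} \<inter> {v \<in> V. 5 * v + k \<in> X2} = {}"
      using part by auto
    ultimately show ?thesis
      using assms(2) unfolding vertex_arrows_def contains_induced_iff by blast
  qed
  obtain k j where kj: "k < 5" "j < 5" "C5_adj k j" "?T X1 k = ?T X1 j"
    using C5_not_bipartite[of "?T X1"] by blast
  have "X1 \<subseteq> C5_blowup_V V" "X2 \<subseteq> C5_blowup_V V"
    using part by auto
  then show "contains X1 (C5_blowup_E V E) (turan_V (2 * t * r)) (turan_E (2 * t * r) (2 * r)) \<or>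
    contains X2 (C5_blowup_E V E) (turan_V (2 * t * r)) (turan_E (2 * t * r) (2 * r))"
    using C5_blowup_contains_turan[OF assms(1) kj(1-3)] layer[OF kj(1)] layer[OF kj(2)] kj(4)
    by blast
qed

lemma vertex_arrows_edgeless:
  "vertex_arrows {..<a + b - 1} (\<lambda>_ _. False) (turan_V a) (turan_E a 1) (turan_V b) (turan_E b 1)"
  unfolding vertex_arrows_def contains_induced_iff
proof (intro allI impI)
  txt \<open>\<open>T(n, 1)\<close> has no edges: all its vertices lie in the single part.\<close>
  have edgeless: "contains X (\<lambda>_ _. False) (turan_V n) (turan_E n 1)" if n: "n \<le> card X" for X n
  proof -
    obtain Y where Y: "Y \<subseteq> X" "card Y = n" "finite Y"
      using obtain_subset_with_card_n[OF n] by blast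
    then obtain h where "bij_betw h {..<n} Y"
      using ex_bij_betw_nat_finite[OF Y(3)] by (auto simp: atLeast0LessThan)
    then show ?thesis
      using Y(1) unfolding contains_def turan_V_def turan_E_def bij_betw_def by auto
  qed
  fix X1 X2 :: "nat set" assume part: "X1 \<union> X2 = {..<a + b - 1} \<and> X1 \<inter> X2 = {}"
  then have "finite X1" "finite X2"
    by (metis finite_Un finite_lessThan)+
  then have "card X1 + card X2 = a + b - 1"
    using part card_Un_disjoint by (metis card_lessThan)
  then have "a \<le> card X1 \<or> b \<le> card X2"
    by linarith
  then show "contains X1 (\<lambda>_ _. False) (turan_V a) (turan_E a 1) \<or>
    contains X2 (\<lambda>_ _. False) (turan_V b) (turan_E b 1)"
    using edgeless by blast
qed

lemma Fv_le_card:
  assumes "simple_graph V E" "\<not> contains V E (complete_V k) (complete_E k)"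
    and "vertex_arrows V E H1V H1E H2V H2E"
  shows "Fv H1V H1E H2V H2E k \<le> enat (card V)"
  unfolding Fv_def by (rule Inf_lower) (use assms in blast)

lemma Fv_attained:
  assumes "Fv H1V H1E H2V H2E k \<noteq> \<infinity>"
  obtains V E where "simple_graph V E" "\<not> contains V E (complete_V k) (complete_E k)"
    "vertex_arrows V E H1V H1E H2V H2E" "Fv H1V H1E H2V H2E k = enat (card V)"
proof -
  let ?S = "{enat (card V) | V E. simple_graph V E \<and>
      \<not> contains V E (complete_V k) (complete_E k) \<and> vertex_arrows V E H1V H1E H2V H2E}"
  have "?S \<noteq> {}"
    using assms unfolding Fv_def by (metis Inf_empty top_enat_def)
  then obtain x where "x \<in> ?S"
    by blast
  then have "Inf ?S \<in> ?S"
    by (rule wellorder_InfI)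
  then show ?thesis
    using that unfolding Fv_def by blast
qed

lemma Fv_turan_double_le:
  assumes "r \<ge> 1"
  shows "Fv (turan_V (2 * t * r)) (turan_E (2 * t * r) (2 * r))
      (turan_V (2 * t * r)) (turan_E (2 * t * r) (2 * r)) (2 * r + 1)
    \<le> 5 * Fv (turan_V (t * r)) (turan_E (t * r) r) (turan_V (t * r)) (turan_E (t * r) r) (r + 1)"
proof (cases "Fv (turan_V (t * r)) (turan_E (t * r) r) (turan_V (t * r)) (turan_E (t * r) r) (r + 1) = \<infinity>")
  case False
  then obtain V E where G: "simple_graph V E" "\<not> contains V E (complete_V (r + 1)) (complete_E (r + 1))"
    "vertex_arrows V E (turan_V (t * r)) (turan_E (t * r) r) (turan_V (t * r)) (turan_E (t * r) r)"
    and Fv_eq: "Fv (turan_V (t * r)) (turan_E (t * r) r) (turan_V (t * r)) (turan_E (t * r) r) (r + 1)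
      = enat (card V)"
    by (rule Fv_attained)
  have "Fv (turan_V (2 * t * r)) (turan_E (2 * t * r) (2 * r))
      (turan_V (2 * t * r)) (turan_E (2 * t * r) (2 * r)) (2 * r + 1) \<le> enat (card (C5_blowup_V V))"
    using simple_graph_C5_blowup[OF G(1)] C5_blowup_clique_free[OF G(2)]
      vertex_arrows_C5_blowup[OF assms G(3)] by (rule Fv_le_card)
  also have "\<dots> = 5 * enat (card V)"
    using G(1) card_C5_blowup_V unfolding simple_graph_def by (simp add: numeral_eq_enat)
  finally show ?thesis
    using Fv_eq by simp
next
  case True
  then show ?thesis
    by (simp add: imult_infinity_right)
qed

lemma Fv_edgeless_le: "Fv (turan_V a) (turan_E a 1) (turan_V b) (turan_E b 1) 2 \<le> enat (a + b - 1)"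
proof -
  have "\<not> contains {..<a + b - 1} (\<lambda>_ _. False) (complete_V 2) (complete_E 2)"
    unfolding contains_def complete_V_def complete_E_def by force
  then show ?thesis
    using Fv_le_card[OF _ _ vertex_arrows_edgeless] unfolding simple_graph_def by simp
qed

theorem mainTheorem9:
  shows "(\<forall>t r :: nat. t \<ge> 2 \<longrightarrow> r \<ge> 2 \<longrightarrow>
           Fv (turan_V (2*t*r)) (turan_E (2*t*r) (2*r)) (turan_V (2*t*r)) (turan_E (2*t*r) (2*r)) (2*r+1)
           \<le> 5 * Fv (turan_V (t*r)) (turan_E (t*r) r) (turan_V (t*r)) (turan_E (t*r) r) (r+1))
       \<and> (\<forall>t :: nat. t \<ge> 2 \<longrightarrow>
           Fv (turan_V (4*t)) (turan_E (4*t) 4) (turan_V (4*t)) (turan_E (4*t) 4) 5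
           \<le> enat (50*t - 25))"
proof (intro conjI allI impI)
  fix t r :: nat
  assume "t \<ge> 2" "r \<ge> 2"
  then show "Fv (turan_V (2*t*r)) (turan_E (2*t*r) (2*r)) (turan_V (2*t*r)) (turan_E (2*t*r) (2*r)) (2*r+1)
      \<le> 5 * Fv (turan_V (t*r)) (turan_E (t*r) r) (turan_V (t*r)) (turan_E (t*r) r) (r+1)"
    using Fv_turan_double_le by simp
next
  fix t :: nat
  assume "t \<ge> 2"
  have "Fv (turan_V (4*t)) (turan_E (4*t) 4) (turan_V (4*t)) (turan_E (4*t) 4) 5
      \<le> 5 * Fv (turan_V (2*t)) (turan_E (2*t) 2) (turan_V (2*t)) (turan_E (2*t) 2) 3"
    using Fv_turan_double_le[of 2 t] by (simp add: mult.commute mult.left_commute)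
  also have "\<dots> \<le> 5 * (5 * Fv (turan_V t) (turan_E t 1) (turan_V t) (turan_E t 1) 2)"
    using Fv_turan_double_le[of 1 t] by (intro mult_left_mono) (simp_all add: numeral_2_eq_2 numeral_3_eq_3)
  also have "\<dots> \<le> 5 * (5 * enat (t + t - 1))"
    using Fv_edgeless_le[of t t] by (intro mult_left_mono) simp_all
  also have "\<dots> = enat (50*t - 25)"
    by (simp add: numeral_eq_enat)
  finally show "Fv (turan_V (4*t)) (turan_E (4*t) 4) (turan_V (4*t)) (turan_E (4*t) 4) 5
      \<le> enat (50*t - 25)" .
qed

end
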